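(* For every $j\in[n-1]$, the geometric crystal operator $\bar e_j^c$ on $\mathrm{GT}_n^{\le m}$ preserves shape: $\mathrm{sh}(\bar e_j^c(\mathbf{z}))=\mathrm{sh}(\mathbf{z})$ as rational functions of $\mathbf{z}$ and $c$.
   Context: $\mathrm{GT}_n^{\le m}$ is the torus of arrays $\mathbf{z}=(z_{i,j})$, $z_{i,j}\in\mathbb{C}^*$, $1\le i\le m$, $i\le j\le n$; $p=\min(m,n)$ and $\mathrm{sh}(\mathbf{z})=(z_{1,n},\dots,z_{p,n})$. $E_{a,b}$ is a matrix unit, $x_j(a)=I+aE_{j,j+1}$, and $\Delta_I(A)$ is the minor of an $n\times n$ matrix $A$ with rows $I$ and columns $[1,|I|]$ ($\Delta_\emptyset=1$). $W^i(y_i,\dots,y_n)=\sum_{k<i}E_{kk}+\sum_{k\ge i}y_kE_{kk}+\sum_{k=i}^{n-1}E_{k+1,k}$; $\Phi(\mathbf{z})=W^p(z_{p,p},\frac{z_{p,p+1}}{z_{p,p}},\dots,\frac{z_{p,n}}{z_{p,n-1}})\cdots W^1(z_{1,1},\frac{z_{1,2}}{z_{1,1}},\dots,\frac{z_{1,n}}{z_{1,n-1}})$; $\Psi(A)=(\Delta_{[i,j]}(A)/\Delta_{[i+1,j]}(A))_{1\le i\le m,\,i\le j\le n}$. With $A=\Phi(\mathbf{z})$: $\bar\varepsilon_j(\mathbf{z})=A_{j+1,j+1}/A_{j+1,j}$, $\bar\varphi_j(\mathbf{z})=A_{j,j}/A_{j+1,j}$, and $\bar e_j^c(\mathbf{z})=\Psi\big(x_j((c-1)\bar\varphi_j(\mathbf{z}))\,A\,x_j((c^{-1}-1)\bar\varepsilon_j(\mathbf{z}))\big)$.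 *)

theory Defs
  imports Complex_Main "Jordan_Normal_Form.Determinant" "Jordan_Normal_Form.DL_Submatrix"
begin

(* Conventions: matrices are n x n JNF matrices (0-based internally);
   all mathematical indices below are 1-based as in the paper,
   entry (k,l) of the paper is  A $$ (k-1, l-1). *)

definition GT :: "nat \<Rightarrow> nat \<Rightarrow> (nat \<Rightarrow> nat \<Rightarrow> complex) \<Rightarrow> bool" where
  "GT n m z \<longleftrightarrow> (\<forall>i j. 1 \<le> i \<and> i \<le> m \<and> i \<le> j \<and> j \<le> n \<longrightarrow> z i j \<noteq> 0)"

definition Eunit :: "nat \<Rightarrow> nat \<Rightarrow> nat \<Rightarrow> complex mat" where
  "Eunit n a b = mat n n (\<lambda>(r,s). if r + 1 = a \<and> s + 1 = b then 1 else 0)"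

definition xmat :: "nat \<Rightarrow> nat \<Rightarrow> complex \<Rightarrow> complex mat" where
  "xmat n j a = 1\<^sub>m n + a \<cdot>\<^sub>m Eunit n j (j + 1)"

definition Wmat :: "nat \<Rightarrow> nat \<Rightarrow> (nat \<Rightarrow> complex) \<Rightarrow> complex mat" where
  "Wmat n i y = mat n n (\<lambda>(r,s). let k = r + 1; l = s + 1 in
      (if k = l then (if k < i then 1 else y k)
       else if k = l + 1 \<and> i \<le> l \<and> l \<le> n - 1 then 1 else 0))"

definition Wargs :: "(nat \<Rightarrow> nat \<Rightarrow> complex) \<Rightarrow> nat \<Rightarrow> nat \<Rightarrow> complex" where
  "Wargs z i k = (if k = i then z i i else z i k / z i (k - 1))"

fun Phi_aux :: "nat \<Rightarrow> (nat \<Rightarrow> nat \<Rightarrow> complex) \<Rightarrow> nat \<Rightarrow> complex mat" where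
  "Phi_aux n z 0 = 1\<^sub>m n"
| "Phi_aux n z (Suc k) = Wmat n (Suc k) (Wargs z (Suc k)) * Phi_aux n z k"

definition Phi :: "nat \<Rightarrow> nat \<Rightarrow> (nat \<Rightarrow> nat \<Rightarrow> complex) \<Rightarrow> complex mat" where
  "Phi n m z = Phi_aux n z (min m n)"

(* Delta_I(A): minor with rows I (1-based) and columns [1,|I|]; Delta_{} = 1 *)
definition minor :: "complex mat \<Rightarrow> nat set \<Rightarrow> complex" where
  "minor A I = det (submatrix A ((\<lambda>r. r - 1) ` I) {0..<card I})"

definition Psi :: "complex mat \<Rightarrow> nat \<Rightarrow> nat \<Rightarrow> complex" where
  "Psi A i j = minor A {i..j} / minor A {i+1..j}"

definition epsbar :: "nat \<Rightarrow> nat \<Rightarrow> nat \<Rightarrow> (nat \<Rightarrow> nat \<Rightarrow> complex) \<Rightarrow> complex" where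
  "epsbar n m j z = (let A = Phi n m z in A $$ (j, j) / A $$ (j, j - 1))"

definition phibar :: "nat \<Rightarrow> nat \<Rightarrow> nat \<Rightarrow> (nat \<Rightarrow> nat \<Rightarrow> complex) \<Rightarrow> complex" where
  "phibar n m j z = (let A = Phi n m z in A $$ (j - 1, j - 1) / A $$ (j, j - 1))"

definition ebar_mat :: "nat \<Rightarrow> nat \<Rightarrow> nat \<Rightarrow> complex \<Rightarrow> (nat \<Rightarrow> nat \<Rightarrow> complex) \<Rightarrow> complex mat" where
  "ebar_mat n m j c z = xmat n j ((c - 1) * phibar n m j z) * Phi n m z
                        * xmat n j ((inverse c - 1) * epsbar n m j z)"

(* geometric crystal operator \bar e_j^c; result array (restricted to 1<=i<=m, i<=j<=n) *)
definition ebar :: "nat \<Rightarrow> nat \<Rightarrow> nat \<Rightarrow> complex \<Rightarrow> (nat \<Rightarrow> nat \<Rightarrow> complex) \<Rightarrow> nat \<Rightarrow> nat \<Rightarrow> complex" where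
  "ebar n m j c z = Psi (ebar_mat n m j c z)"

definition sh :: "nat \<Rightarrow> nat \<Rightarrow> (nat \<Rightarrow> nat \<Rightarrow> complex) \<Rightarrow> complex list" where
  "sh n m z = map (\<lambda>i. z i n) [1..<min m n + 1]"

end

theory Submission
  imports Defs
begin

(* Psi(B)_(i,n) is the ratio of the bottom-left minors Delta_[i,n](B) and Delta_[i+1,n](B).
   These minors do not change under left or right multiplication by an upper unitriangular
   matrix such as x_j(t): the bottom rows of T B only see the bottom rows of B, through a
   unitriangular block of T, and dually for the leading columns of B T.  For
   Phi(z) = W^p ... W^1, peeling W^1, W^2, ... off the right moves the column window of the
   minor one step to the right at the cost of a unitriangular factor, until the window is a
   principal block of the lower triangular matrix W^p ... W^i, whose diagonal telescopes to
   z_(i,n) ... z_(p,n).  Hence Delta_[i,n](B) = z_(i,n) ... z_(p,n) and Psi(B)_(i,n) = z_(i,n). *)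

definition square_block :: "'a mat \<Rightarrow> nat \<Rightarrow> nat \<Rightarrow> nat \<Rightarrow> 'a mat" where
  "square_block A r c s = mat s s (\<lambda>(u,v). A $$ (r+u, c+v))"

lemma square_block_carrier [simp]: "square_block A r c s \<in> carrier_mat s s"
  by (simp add: square_block_def)

lemma dim_square_block [simp]:
  "dim_row (square_block A r c s) = s" "dim_col (square_block A r c s) = s"
  by (simp_all add: square_block_def)

lemma index_square_block [simp]:
  "u < s \<Longrightarrow> v < s \<Longrightarrow> square_block A r c s $$ (u,v) = A $$ (r+u, c+v)"
  by (simp add: square_block_def)

lemma pick_atLeastLessThan: "a + k < b \<Longrightarrow> pick {a..<b} k = a + k"
  by (induction k) (auto intro!: Least_equality)

lemma minor_atLeastAtMost:
  assumes A: "A \<in> carrier_mat n n" and i: "1 \<le> i" "i \<le> n + 1"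
  shows "minor A {i..n} = det (square_block A (i-1) 0 (n+1-i))"
proof -
  have rows: "(\<lambda>r. r - 1) ` {i..n} = {i-1..<n}"
  proof (intro equalityI subsetI)
    fix x assume "x \<in> {i-1..<n}"
    then have "x = x + 1 - 1" "x + 1 \<in> {i..n}" using i by auto
    then show "x \<in> (\<lambda>r. r - 1) ` {i..n}" by blast
  qed (use i in auto)
  have "{r. r < dim_row A \<and> r \<in> {i-1..<n}} = {i-1..<n}"
    "{r. r < dim_col A \<and> r \<in> {0..<n+1-i}} = {0..<n+1-i}"
    using A i by auto
  then have "submatrix A {i-1..<n} {0..<n+1-i} = square_block A (i-1) 0 (n+1-i)"
    unfolding submatrix_def using i by (intro eq_matI) (auto simp: pick_atLeastLessThan)
  then show ?thesis unfolding minor_def rows by simp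
qed

lemma index_mult_mat_sum:
  assumes "A \<in> carrier_mat n k" "B \<in> carrier_mat k l" "i < n" "j < l"
  shows "(A * B) $$ (i,j) = (\<Sum>q<k. A $$ (i,q) * B $$ (q,j))"
  using assms by (auto simp: scalar_prod_def lessThan_atLeast0 intro!: sum.cong)

lemma square_block_mult:
  assumes "A \<in> carrier_mat m k" "B \<in> carrier_mat k l"
    and "r + s \<le> m" "d + s \<le> k" "c + s \<le> l"
    and "\<And>u v q. u < s \<Longrightarrow> v < s \<Longrightarrow> q < k \<Longrightarrow> q \<notin> {d..<d+s} \<Longrightarrow>
                    A $$ (r+u, q) * B $$ (q, c+v) = 0"
  shows "square_block (A * B) r c s = square_block A r d s * square_block B d c s"
proof (rule eq_matI)
  fix u v assume "u < dim_row (square_block A r d s * square_block B d c s)"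
    "v < dim_col (square_block A r d s * square_block B d c s)"
  then have u: "u < s" and v: "v < s" by simp_all
  have "(A * B) $$ (r+u, c+v) = (\<Sum>q<k. A $$ (r+u,q) * B $$ (q,c+v))"
    using assms u v by (intro index_mult_mat_sum) auto
  also have "\<dots> = (\<Sum>q\<in>{d..<d+s}. A $$ (r+u,q) * B $$ (q,c+v))"
    using assms u v by (intro sum.mono_neutral_right) auto
  also have "\<dots> = (\<Sum>w<s. A $$ (r+u,d+w) * B $$ (d+w,c+v))"
    by (subst sum.atLeastLessThan_shift_0) (simp add: lessThan_atLeast0)
  also have "\<dots> = (square_block A r d s * square_block B d c s) $$ (u,v)"
    using u v by (subst index_mult_mat_sum[OF square_block_carrier square_block_carrier u v]) simp
  finally show "square_block (A * B) r c s $$ (u,v) = (square_block A r d s * square_block B d c s) $$ (u,v)"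
    using u v by simp
qed simp_all

definition upper_unitriangular :: "'a::zero_neq_one mat \<Rightarrow> bool" where
  "upper_unitriangular T \<longleftrightarrow> upper_triangular T \<and> (\<forall>i < dim_row T. T $$ (i,i) = 1)"

lemma det_upper_unitriangular:
  assumes "T \<in> carrier_mat n n" "upper_unitriangular T"
  shows "det T = 1"
proof -
  have "det T = prod_list (diag_mat T)"
    using assms det_upper_triangular by (auto simp: upper_unitriangular_def)
  also have "\<dots> = 1"
    using assms by (simp add: prod_list_diag_prod upper_unitriangular_def)
  finally show ?thesis .
qed

lemma upper_unitriangular_square_block:
  assumes "T \<in> carrier_mat n n" "upper_unitriangular T" "r + s \<le> n"
  shows "upper_unitriangular (square_block T r r s)"
  using assms by (auto simp: upper_unitriangular_def upper_triangular_def)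

lemma det_square_block_unitriangular_mult:
  assumes T: "T \<in> carrier_mat n n" "upper_unitriangular T" and A: "A \<in> carrier_mat n l"
    and "r + s = n" "c + s \<le> l"
  shows "det (square_block (T * A) r c s) = det (square_block A r c s)"
proof -
  have "square_block (T * A) r c s = square_block T r r s * square_block A r c s"
    using assms by (intro square_block_mult[OF T(1) A]) (auto simp: upper_unitriangular_def upper_triangular_def)
  moreover have "det (square_block T r r s) = 1"
    using assms by (intro det_upper_unitriangular[OF square_block_carrier]
        upper_unitriangular_square_block[OF T]) auto
  ultimately show ?thesis by (simp add: det_mult[of _ s])
qed

lemma det_square_block_mult_unitriangular:
  assumes A: "A \<in> carrier_mat l n" and T: "T \<in> carrier_mat n n" "upper_unitriangular T"
    and "r + s \<le> l" "s \<le> n"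
  shows "det (square_block (A * T) r 0 s) = det (square_block A r 0 s)"
proof -
  have "square_block (A * T) r 0 s = square_block A r 0 s * square_block T 0 0 s"
    using assms by (intro square_block_mult[OF A T(1)]) (auto simp: upper_unitriangular_def upper_triangular_def)
  moreover have "det (square_block T 0 0 s) = 1"
    using assms by (intro det_upper_unitriangular[OF square_block_carrier]
        upper_unitriangular_square_block[OF T]) auto
  ultimately show ?thesis by (simp add: det_mult[of _ s])
qed

lemma minor_atLeastAtMost_unitriangular_mult:
  assumes A: "A \<in> carrier_mat n n"
    and X: "X \<in> carrier_mat n n" "upper_unitriangular X"
    and Y: "Y \<in> carrier_mat n n" "upper_unitriangular Y"
    and i: "1 \<le> i" "i \<le> n + 1"
  shows "minor (X * A * Y) {i..n} = minor A {i..n}"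
proof -
  have XA: "X * A \<in> carrier_mat n n" using X A by simp
  have "minor (X * A * Y) {i..n} = det (square_block (X * A * Y) (i-1) 0 (n+1-i))"
    using XA Y i by (intro minor_atLeastAtMost) auto
  also have "\<dots> = det (square_block (X * A) (i-1) 0 (n+1-i))"
    using i by (intro det_square_block_mult_unitriangular[OF XA Y]) auto
  also have "\<dots> = det (square_block A (i-1) 0 (n+1-i))"
    using i by (intro det_square_block_unitriangular_mult[OF X A]) auto
  also have "\<dots> = minor A {i..n}"
    using A i by (intro minor_atLeastAtMost[symmetric])
  finally show ?thesis .
qed

lemma xmat_carrier [simp]: "xmat n j a \<in> carrier_mat n n"
  by (simp add: xmat_def Eunit_def)

lemma upper_unitriangular_xmat: "upper_unitriangular (xmat n j a)"
  by (auto simp: upper_unitriangular_def upper_triangular_def xmat_def Eunit_def)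

lemma Wmat_carrier [simp]: "Wmat n i y \<in> carrier_mat n n"
  by (simp add: Wmat_def)

lemma index_Wmat:
  "r < n \<Longrightarrow> s < n \<Longrightarrow> Wmat n i y $$ (r,s) =
    (if r = s then (if r + 1 < i then 1 else y (r+1))
     else if r = s + 1 \<and> i \<le> s + 1 \<and> s + 1 \<le> n - 1 then 1 else 0)"
  by (simp add: Wmat_def Let_def)

fun Wprod :: "nat \<Rightarrow> (nat \<Rightarrow> nat \<Rightarrow> complex) \<Rightarrow> nat \<Rightarrow> nat \<Rightarrow> complex mat" where
  "Wprod n z a 0 = 1\<^sub>m n"
| "Wprod n z a (Suc k) = Wmat n (a+k) (Wargs z (a+k)) * Wprod n z a k"

lemma Wprod_carrier [simp]: "Wprod n z a k \<in> carrier_mat n n"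
  by (induction k) (auto intro!: mult_carrier_mat[of _ n n _ n])

lemma Phi_eq_Wprod: "Phi n m z = Wprod n z 1 (min m n)"
proof -
  have "Phi_aux n z k = Wprod n z 1 k" for k
    by (induction k) auto
  then show ?thesis by (simp add: Phi_def)
qed

lemma Wprod_Suc_right: "Wprod n z a (Suc k) = Wprod n z (Suc a) k * Wmat n a (Wargs z a)"
proof (induction k)
  case 0
  show ?case by (simp add: right_mult_one_mat[OF Wmat_carrier] left_mult_one_mat[OF Wmat_carrier])
next
  case (Suc k)
  have "Wprod n z a (Suc (Suc k))
      = Wmat n (a + Suc k) (Wargs z (a + Suc k)) * (Wprod n z (Suc a) k * Wmat n a (Wargs z a))"
    using Suc by simp
  also have "\<dots> = Wprod n z (Suc a) (Suc k) * Wmat n a (Wargs z a)"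
    by (simp add: assoc_mult_mat[of _ n n _ n _ n])
  finally show ?case .
qed

lemma Wprod_above_diag: "r < s \<Longrightarrow> s < n \<Longrightarrow> Wprod n z a k $$ (r,s) = 0"
proof (induction k arbitrary: r)
  case (Suc k)
  have "Wprod n z a (Suc k) $$ (r,s)
      = (\<Sum>q<n. Wmat n (a+k) (Wargs z (a+k)) $$ (r,q) * Wprod n z a k $$ (q,s))"
    using Suc.prems by (simp add: index_mult_mat_sum[OF Wmat_carrier Wprod_carrier])
  also have "\<dots> = 0"
    using Suc by (intro sum.neutral) (auto simp: index_Wmat)
  finally show ?case .
qed simp

lemma Wprod_diag:
  "r < n \<Longrightarrow> Wprod n z a k $$ (r,r) = (\<Prod>b\<in>{a..<a+k}. if r + 1 < b then 1 else Wargs z b (r+1))"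
proof (induction k)
  case (Suc k)
  have "Wprod n z a (Suc k) $$ (r,r)
      = (\<Sum>q<n. Wmat n (a+k) (Wargs z (a+k)) $$ (r,q) * Wprod n z a k $$ (q,r))"
    using Suc.prems by (simp add: index_mult_mat_sum[OF Wmat_carrier Wprod_carrier])
  also have "\<dots> = (\<Sum>q\<in>{r}. Wmat n (a+k) (Wargs z (a+k)) $$ (r,q) * Wprod n z a k $$ (q,r))"
    using Suc.prems by (intro sum.mono_neutral_right) (auto simp: index_Wmat Wprod_above_diag)
  finally show ?case
    using Suc by (simp add: index_Wmat mult.commute)
qed simp

lemma Wprod_unit_col:
  "s + 1 < a \<Longrightarrow> r < n \<Longrightarrow> s < n \<Longrightarrow> Wprod n z a k $$ (r,s) = (if r = s then 1 else 0)"
proof (induction k arbitrary: r)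
  case (Suc k)
  have "Wprod n z a (Suc k) $$ (r,s)
      = (\<Sum>q<n. Wmat n (a+k) (Wargs z (a+k)) $$ (r,q) * Wprod n z a k $$ (q,s))"
    using Suc.prems by (simp add: index_mult_mat_sum[OF Wmat_carrier Wprod_carrier])
  also have "\<dots> = (\<Sum>q\<in>{s}. Wmat n (a+k) (Wargs z (a+k)) $$ (r,q) * Wprod n z a k $$ (q,s))"
    using Suc by (intro sum.mono_neutral_right) auto
  finally show ?case
    using Suc by (auto simp: index_Wmat)
qed simp

lemma prod_Wargs:
  assumes "k \<le> l" and "\<And>l'. k \<le> l' \<Longrightarrow> l' < l \<Longrightarrow> z k l' \<noteq> 0"
  shows "(\<Prod>l'\<in>{k..l}. Wargs z k l') = z k l"
  using assms
proof (induction l rule: dec_induct)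
  case (step l)
  have "(\<Prod>l'\<in>{k..Suc l}. Wargs z k l') = Wargs z k (Suc l) * z k l"
    using step by (simp add: atLeastAtMostSuc_conv)
  also have "\<dots> = z k (Suc l)"
    using step by (simp add: Wargs_def)
  finally show ?case .
qed (simp add: Wargs_def)

lemma det_square_block_Wprod_diag:
  assumes a: "1 \<le> a" "a + k \<le> n + 1"
    and nz: "\<And>b l. a \<le> b \<Longrightarrow> b < a + k \<Longrightarrow> b \<le> l \<Longrightarrow> l < n \<Longrightarrow> z b l \<noteq> 0"
  shows "det (square_block (Wprod n z a k) (a-1) (a-1) (n+1-a)) = (\<Prod>b\<in>{a..<a+k}. z b n)"
proof -
  let ?B = "square_block (Wprod n z a k) (a-1) (a-1) (n+1-a)"
  have "det ?B = prod_list (diag_mat ?B)"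
    by (rule det_lower_triangular[of "n+1-a"]) (use a in \<open>auto simp: Wprod_above_diag\<close>)
  also have "\<dots> = (\<Prod>u\<in>{0..<n+1-a}. Wprod n z a k $$ (a-1+u, a-1+u))"
    by (simp add: prod_list_diag_prod)
  also have "\<dots> = (\<Prod>l\<in>{a..<n+1}. Wprod n z a k $$ (l-1, l-1))"
    by (subst prod.atLeastLessThan_shift_0[of _ a]) (use a in \<open>auto intro!: prod.cong\<close>)
  also have "\<dots> = (\<Prod>l\<in>{a..<n+1}. \<Prod>b\<in>{a..<a+k}. if l < b then 1 else Wargs z b l)"
  proof (intro prod.cong refl)
    fix l assume "l \<in> {a..<n+1}"
    then have "l - 1 < n" "l - 1 + 1 = l" using a by auto
    then show "Wprod n z a k $$ (l-1, l-1) = (\<Prod>b\<in>{a..<a+k}. if l < b then 1 else Wargs z b l)"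
      by (simp only: Wprod_diag)
  qed
  also have "\<dots> = (\<Prod>b\<in>{a..<a+k}. \<Prod>l\<in>{a..<n+1}. if l < b then 1 else Wargs z b l)"
    by (rule prod.swap)
  also have "\<dots> = (\<Prod>b\<in>{a..<a+k}. \<Prod>l\<in>{b..n}. Wargs z b l)"
  proof (rule prod.cong[OF refl])
    fix b assume b: "b \<in> {a..<a+k}"
    have "{l \<in> {a..<n+1}. \<not> l < b} = {b..n}"
      using b by auto
    moreover have "(\<Prod>l\<in>{a..<n+1}. if l < b then 1 else Wargs z b l)
        = (\<Prod>l\<in>{l \<in> {a..<n+1}. \<not> l < b}. Wargs z b l)"
      by (subst prod.inter_filter) (auto intro!: prod.cong)
    ultimately show "(\<Prod>l\<in>{a..<n+1}. if l < b then 1 else Wargs z b l) = (\<Prod>l\<in>{b..n}. Wargs z b l)"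
      by simp
  qed
  also have "\<dots> = (\<Prod>b\<in>{a..<a+k}. z b n)"
    using a nz by (intro prod.cong refl prod_Wargs) auto
  finally show ?thesis .
qed

(* Column a-1 of Wprod n z (Suc a) k is a unit vector vanishing on the rows of the window, so
   only columns a, a+1, ... of it meet the block of W^a, which is upper unitriangular. *)
lemma det_square_block_Wprod_Suc:
  assumes "1 \<le> a" "a < i" "i \<le> n + 1"
  shows "det (square_block (Wprod n z a (Suc k)) (i-1) (a-1) (n+1-i))
       = det (square_block (Wprod n z (Suc a) k) (i-1) a (n+1-i))"
proof -
  let ?s = "n+1-i"
  let ?W = "Wmat n a (Wargs z a)"
  have "square_block (Wprod n z a (Suc k)) (i-1) (a-1) ?s
      = square_block (Wprod n z (Suc a) k) (i-1) a ?s * square_block ?W a (a-1) ?s"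
    unfolding Wprod_Suc_right using assms
    by (intro square_block_mult[OF Wprod_carrier Wmat_carrier]) (auto simp: index_Wmat Wprod_unit_col)
  moreover have "upper_unitriangular (square_block ?W a (a-1) ?s)"
    using assms by (auto simp: upper_unitriangular_def upper_triangular_def index_Wmat)
  ultimately show ?thesis
    by (simp add: det_mult[of _ ?s] det_upper_unitriangular[OF square_block_carrier])
qed

lemma det_square_block_Wprod:
  assumes "1 \<le> a" "a \<le> i" "i \<le> a + k" "a + k \<le> n + 1"
    and "\<And>b l. a \<le> b \<Longrightarrow> b < a + k \<Longrightarrow> b \<le> l \<Longrightarrow> l < n \<Longrightarrow> z b l \<noteq> 0"
  shows "det (square_block (Wprod n z a k) (i-1) (a-1) (n+1-i)) = (\<Prod>b\<in>{i..<a+k}. z b n)"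
  using assms
proof (induction k arbitrary: a)
  case (Suc k)
  show ?case
  proof (cases "i = a")
    case True
    then show ?thesis using det_square_block_Wprod_diag[of a "Suc k" n z] Suc.prems by simp
  next
    case False
    then have "det (square_block (Wprod n z a (Suc k)) (i-1) (a-1) (n+1-i))
        = det (square_block (Wprod n z (Suc a) k) (i-1) (Suc a - 1) (n+1-i))"
      using Suc.prems det_square_block_Wprod_Suc[of a i n z k] by simp
    also have "\<dots> = (\<Prod>b\<in>{i..<a+Suc k}. z b n)"
      using Suc.prems False by (subst Suc.IH) auto
    finally show ?thesis .
  qed
next
  case 0
  then show ?case using det_square_block_Wprod_diag[of a 0 n z] by simp
qed

lemma minor_Phi:
  assumes "GT n m z" "1 \<le> i" "i \<le> min m n + 1"
  shows "minor (Phi n m z) {i..n} = (\<Prod>k\<in>{i..min m n}. z k n)"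
proof -
  have "minor (Phi n m z) {i..n} = det (square_block (Wprod n z 1 (min m n)) (i-1) (1-1) (n+1-i))"
    using assms by (simp add: Phi_eq_Wprod minor_atLeastAtMost)
  also have "\<dots> = (\<Prod>k\<in>{i..<1 + min m n}. z k n)"
    using assms by (intro det_square_block_Wprod) (auto simp: GT_def)
  finally show ?thesis by (simp add: atLeastLessThanSuc_atLeastAtMost)
qed

lemma minor_ebar_mat:
  "1 \<le> i \<Longrightarrow> i \<le> n + 1 \<Longrightarrow> minor (ebar_mat n m j c z) {i..n} = minor (Phi n m z) {i..n}"
  unfolding ebar_mat_def Phi_eq_Wprod
  by (intro minor_atLeastAtMost_unitriangular_mult) (simp_all add: upper_unitriangular_xmat)

(* Only GT n m z is used: x_j(t) is unitriangular for every t, including the junk values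
   produced by a zero denominator in epsbar or phibar. *)
theorem lemma3p6:
  fixes n m j :: nat and z :: "nat \<Rightarrow> nat \<Rightarrow> complex" and c :: complex
  assumes "1 \<le> j" and "j \<le> n - 1"
    and "GT n m z"
    and "c \<noteq> 0"
    and "Phi n m z $$ (j, j - 1) \<noteq> 0"
    and "\<forall>i \<in> {1..min m n}. minor (ebar_mat n m j c z) {i+1..n} \<noteq> 0"
  shows "sh n m (ebar n m j c z) = sh n m z"
  unfolding sh_def
proof (intro map_cong refl)
  fix i assume "i \<in> set [1..<min m n + 1]"
  then have i: "1 \<le> i" "i \<le> min m n" "i \<le> n + 1" "i \<le> min m n + 1" by auto
  have "minor (ebar_mat n m j c z) {i..n} = (\<Prod>l\<in>{i..min m n}. z l n)"
    "minor (ebar_mat n m j c z) {i+1..n} = (\<Prod>l\<in>{i+1..min m n}. z l n)"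
    using i by (simp_all add: minor_ebar_mat minor_Phi[OF \<open>GT n m z\<close>])
  then have "ebar n m j c z i n = (\<Prod>l\<in>{i..min m n}. z l n) / (\<Prod>l\<in>{i+1..min m n}. z l n)"
    by (simp add: ebar_def Psi_def)
  moreover have "(\<Prod>l\<in>{i+1..min m n}. z l n) \<noteq> 0"
    using \<open>GT n m z\<close> by (auto simp: GT_def)
  ultimately show "ebar n m j c z i n = z i n"
    using i by (simp add: prod.atLeast_Suc_atMost)
qed

end
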